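(* Suppose $q^{2k}\neq1$. Then there are algebra homomorphisms into $\mathrm{Cl}_q(n,k)$ defined on generators as follows. (1) For $\mathfrak{g}=\mathfrak{sl}_n$: $\Theta\colon U_q(\mathfrak{g},k)\to\mathrm{Cl}_q(n,k)$ with $E_i\mapsto\psi_i\psi_{i+1}^*$, $F_i\mapsto\psi_{i+1}\psi_i^*$, $K_i\mapsto\omega_i\omega_{i+1}^{-1}$ for $i=1,\dots,n-1$. (2) For $\mathfrak{g}=\mathfrak{so}_{2n}$: $\Theta\colon U_q(\mathfrak{g},k)\to\mathrm{Cl}_q(n,k)$ with $E_i\mapsto\psi_i\psi_{i+1}^*$, $F_i\mapsto\psi_{i+1}\psi_i^*$, $K_i\mapsto\omega_i\omega_{i+1}^{-1}$ for $i=1,\dots,n-1$, and $E_n\mapsto\psi_{n-1}\psi_n$, $F_n\mapsto\psi_n^*\psi_{n-1}^*$, $K_n\mapsto q\omega_{n-1}\omega_n$. (3) For $\mathfrak{g}=\mathfrak{so}_{2n+1}$, if $q^{1/2}\in\mathbb{k}$: an algebra homomorphism $U_{q^{1/2}}(\mathfrak{g},k)\to\mathrm{Cl}_q(n,k)$ with $E_i\mapsto\psi_i\psi_{i+1}^*$, $F_i\mapsto\psi_{i+1}\psi_i^*$, $K_i\mapsto\omega_i\omega_{i+1}^{-1}$ for $i=1,\dots,n-1$, and $E_n\mapsto\psi_n$, $F_n\mapsto\psi_n^*$, $K_n\mapsto q^{1/2}\omega_n$.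
   Context: Let $\mathbb{k}$ be a field of characteristic different from $2$, let $q\in\mathbb{k}^\times$, and let $n,k$ be positive integers. The quantum Clifford algebra $\mathrm{Cl}_q(n,k)$ is the unital associative $\mathbb{k}$-algebra generated by $\psi_a,\psi_a^*,\omega_a,\omega_a^{-1}$ for $a\in\{1,\dots,n\}$, subject to the relations (for all $a,b$): $\omega_a\omega_b=\omega_b\omega_a$; $\omega_a\omega_a^{-1}=1$; $\omega_a\psi_b=q^{\delta_{ab}}\psi_b\omega_a$; $\omega_a\psi_b^*=q^{-\delta_{ab}}\psi_b^*\omega_a$; $\psi_a\psi_b+\psi_b\psi_a=0$; $\psi_a^*\psi_b^*+\psi_b^*\psi_a^*=0$; $\psi_a\psi_a^*+q^k\psi_a^*\psi_a=\omega_a^{-k}$; $\psi_a\psi_a^*+q^{-k}\psi_a^*\psi_a=\omega_a^{k}$; $\psi_a\psi_b^*+\psi_b^*\psi_a=0$ if $a\neq b$. Twisted quantum group: let $\mathfrak{g}$ be a semisimple Lie algebra with simple roots $\alpha_1,\dots,\alpha_r$, Cartan matrix $A=(a_{ij})$ and positive coprime integers $d_i$ with $DA$ symmetric, $D=\mathrm{diag}(d_1,\dots,d_r)$. For a parameter $Q\in\mathbb{k}$ (taken transcendental, as is the standing convention in the paper's definition of $U_Q$), put $Q_i=Q^{d_i}$, $[m]_{x}=(x^m-x^{-m})/(x-x^{-1})$, $[m]_x!=[m]_x\cdots[1]_x$, and $q$-binomials $\begin{bmatrix} m\\ s\end{bmatrix}_x=[m]_x!/([s]_x![m-s]_x!)$.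 Then $U_Q(\mathfrak{g},k)$ is the unital associative $\mathbb{k}$-algebra generated by $E_i,F_i,K_i,K_i^{-1}$ ($i=1,\dots,r$) with relations $K_iK_j=K_jK_i$, $K_iK_i^{-1}=K_i^{-1}K_i=1$, $K_iE_jK_i^{-1}=Q_i^{a_{ij}}E_j$, $K_iF_jK_i^{-1}=Q_i^{-a_{ij}}F_j$, $E_iF_j-F_jE_i=\delta_{ij}\frac{K_i^k-K_i^{-k}}{Q_i^k-Q_i^{-k}}$, and for $i\neq j$ the Serre relations $\sum_{m=0}^{1-a_{ij}}(-1)^m\begin{bmatrix}1-a_{ij}\\ m\end{bmatrix}_{Q_i^k}X_i^mX_jX_i^{1-a_{ij}-m}=0$ for $X\in\{E,F\}$. Conventions (with $e_1,\dots,e_n$ orthonormal): for $\mathfrak{sl}_n$, $\alpha_i=e_i-e_{i+1}$ ($1\le i\le n-1$), all $d_i=1$; for $\mathfrak{so}_{2n}$, $\alpha_i=e_i-e_{i+1}$ ($i<n$), $\alpha_n=e_{n-1}+e_n$, all $d_i=1$; for $\mathfrak{so}_{2n+1}$, $\alpha_i=e_i-e_{i+1}$ ($i<n$), $\alpha_n=e_n$, with $d_i=2$ for $i<n$ and $d_n=1$; and $a_{ij}=2(\alpha_i,\alpha_j)/(\alpha_i,\alpha_i)$. In (1),(2) $Q=q$; in (3) $Q=q^{1/2}$. *)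

theory Defs
  imports Main
begin

text \<open>A unital associative algebra over the field 'k: a ring 'a together with a
  unital ring homomorphism from 'k into the centre of 'a (scalar embedding).\<close>
definition is_kalg :: "('k::field \<Rightarrow> 'a::ring_1) \<Rightarrow> bool" where
  "is_kalg emb \<longleftrightarrow> emb 1 = 1 \<and> (\<forall>x y. emb (x + y) = emb x + emb y)
     \<and> (\<forall>x y. emb (x * y) = emb x * emb y) \<and> (\<forall>x a. emb x * a = a * emb x)"

text \<open>Defining relations of the quantum Clifford algebra Cl_q(n,k), imposed on elements
  psi a, psis a (= psi_a^*), om a, omi a (= omega_a^{-1}), a = 1..n, of a 'k-algebra.\<close>
definition cl_rels :: "('k::field \<Rightarrow> 'a::ring_1) \<Rightarrow> 'k \<Rightarrow> nat \<Rightarrow> nat \<Rightarrow>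
    (nat \<Rightarrow> 'a) \<Rightarrow> (nat \<Rightarrow> 'a) \<Rightarrow> (nat \<Rightarrow> 'a) \<Rightarrow> (nat \<Rightarrow> 'a) \<Rightarrow> bool" where
  "cl_rels emb q n k psi psis om omi \<longleftrightarrow>
    (\<forall>a\<in>{1..n}. \<forall>b\<in>{1..n}.
       om a * om b = om b * om a
     \<and> om a * omi a = 1 \<and> omi a * om a = 1
     \<and> om a * psi b = emb (if a = b then q else 1) * psi b * om a
     \<and> om a * psis b = emb (if a = b then inverse q else 1) * psis b * om a
     \<and> psi a * psi b + psi b * psi a = 0
     \<and> psis a * psis b + psis b * psis a = 0
     \<and> psi a * psis a + emb (q ^ k) * psis a * psi a = omi a ^ k
     \<and> psi a * psis a + emb (inverse q ^ k) * psis a * psi a = om a ^ k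
     \<and> (a \<noteq> b \<longrightarrow> psi a * psis b + psis b * psi a = 0))"

text \<open>Symmetric Gaussian binomial coefficient [m choose s]_x, as the value at x of the
  Laurent polynomial (q-Pascal recursion; agrees with [m]!/([s]![m-s]!) whenever defined).\<close>
fun gbinom :: "'k::field \<Rightarrow> nat \<Rightarrow> nat \<Rightarrow> 'k" where
  "gbinom x 0 s = (if s = 0 then 1 else 0)"
| "gbinom x (Suc m) 0 = 1"
| "gbinom x (Suc m) (Suc s) =
     inverse x ^ Suc s * gbinom x m (Suc s) + x ^ (m - s) * gbinom x m s"

text \<open>Root data: roots as integer vectors indexed by 1..n (coordinates w.r.t. the
  orthonormal e_1..e_n), standard inner product, Cartan matrix a_ij = 2(a_i,a_j)/(a_i,a_i).\<close>
definition ip :: "nat \<Rightarrow> (nat \<Rightarrow> int) \<Rightarrow> (nat \<Rightarrow> int) \<Rightarrow> int" where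
  "ip n u v = (\<Sum>t=1..n. u t * v t)"

definition cartan :: "nat \<Rightarrow> (nat \<Rightarrow> nat \<Rightarrow> int) \<Rightarrow> nat \<Rightarrow> nat \<Rightarrow> int" where
  "cartan n rt i j = (2 * ip n (rt i) (rt j)) div ip n (rt i) (rt i)"

definition evec :: "nat \<Rightarrow> nat \<Rightarrow> int" where
  "evec i = (\<lambda>t. if t = i then 1 else 0)"

definition sl_root :: "nat \<Rightarrow> nat \<Rightarrow> int" where
  "sl_root i = (\<lambda>t. evec i t - evec (Suc i) t)"

definition so_even_root :: "nat \<Rightarrow> nat \<Rightarrow> nat \<Rightarrow> int" where
  "so_even_root n i = (if i < n then sl_root i else (\<lambda>t. evec (n - 1) t + evec n t))"

definition so_odd_root :: "nat \<Rightarrow> nat \<Rightarrow> nat \<Rightarrow> int" where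
  "so_odd_root n i = (if i < n then sl_root i else evec n)"

text \<open>Defining relations of U_Q(g,k) (rank r, Cartan matrix A, symmetrizers d),
  imposed on elements E i, F i, K i, Ki i (= K_i^{-1}), i = 1..r, of a 'k-algebra.\<close>
definition uq_rels :: "('k::field \<Rightarrow> 'a::ring_1) \<Rightarrow> 'k \<Rightarrow> nat \<Rightarrow> (nat \<Rightarrow> nat \<Rightarrow> int)
    \<Rightarrow> (nat \<Rightarrow> nat) \<Rightarrow> nat \<Rightarrow> (nat \<Rightarrow> 'a) \<Rightarrow> (nat \<Rightarrow> 'a) \<Rightarrow> (nat \<Rightarrow> 'a) \<Rightarrow> (nat \<Rightarrow> 'a) \<Rightarrow> bool" where
  "uq_rels emb Q r A d k E F K Ki \<longleftrightarrow>
    (\<forall>i\<in>{1..r}. \<forall>j\<in>{1..r}.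
       K i * K j = K j * K i
     \<and> K i * Ki i = 1 \<and> Ki i * K i = 1
     \<and> K i * E j * Ki i = emb (power_int (Q ^ d i) (A i j)) * E j
     \<and> K i * F j * Ki i = emb (power_int (Q ^ d i) (- A i j)) * F j
     \<and> E i * F j - F j * E i =
         (if i = j then emb (inverse ((Q ^ d i) ^ k - inverse ((Q ^ d i) ^ k)))
                          * (K i ^ k - Ki i ^ k) else 0)
     \<and> (i \<noteq> j \<longrightarrow>
          (\<Sum>m=0..nat (1 - A i j). emb ((-1) ^ m * gbinom ((Q ^ d i) ^ k) (nat (1 - A i j)) m)
              * E i ^ m * E j * E i ^ (nat (1 - A i j) - m)) = 0
        \<and> (\<Sum>m=0..nat (1 - A i j). emb ((-1) ^ m * gbinom ((Q ^ d i) ^ k) (nat (1 - A i j)) m)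
              * F i ^ m * F j * F i ^ (nat (1 - A i j) - m)) = 0))"

end

theory Submission
  imports Defs
begin

(* Conjugation by \<omega>_a rescales \<psi>_b and \<psi>^*_b by
  q^(\<pm>\<delta>_ab), so the images of E_j and F_j are weight vectors of weights \<alpha>_j and -\<alpha>_j, the
  image of K_i conjugates a vector of weight v into q^(\<alpha>_i, v) times itself, and
  Q_i^(a_ij) = q^(\<alpha>_i, \<alpha>_j) in all three cases. The two quadratic relations express
  \<omega>_a^(\<pm>k) through \<psi>_a \<psi>^*_a and \<psi>^*_a \<psi>_a, which makes K_i^k - K_i^(-k) a multiple of
  E_i F_i - F_i E_i. All other relations only use that the \<psi>_a and \<psi>^*_b anticommute (except
  \<psi>_a with \<psi>^*_a) and square to zero: for i \<noteq> j the images of E_i and F_j commute, and in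
  each Serre relation either a_ij = 0 and the images of E_i and E_j commute, or every word of
  the relation contains a repeated fermion and vanishes. *)

section \<open>Commuting and anticommuting elements\<close>

definition commute :: "'a::times \<Rightarrow> 'a \<Rightarrow> bool" where
  "commute x y \<longleftrightarrow> x * y = y * x"

definition anticommute :: "'a::ring \<Rightarrow> 'a \<Rightarrow> bool" where
  "anticommute x y \<longleftrightarrow> x * y + y * x = 0"

lemma commuteD: "commute x y \<Longrightarrow> x * y = y * x"
  unfolding commute_def .

lemma anticommuteD: "anticommute x y \<Longrightarrow> x * y = - (y * x)"
  unfolding anticommute_def by (simp add: eq_neg_iff_add_eq_0)

lemma commute_sym: "commute x y \<Longrightarrow> commute y x"
  unfolding commute_def by simp

lemma anticommute_sym: "anticommute x y \<Longrightarrow> anticommute y x"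
  unfolding anticommute_def by (simp add: add.commute)

lemma commute_mult_right:
  fixes x :: "'a::semigroup_mult"
  shows "commute x y \<Longrightarrow> commute x z \<Longrightarrow> commute x (y * z)"
  unfolding commute_def by (metis mult.assoc)

lemma commute_mult_right_anticommute:
  assumes "anticommute x y" "anticommute x z"
  shows "commute x (y * z)"
proof -
  have "x * (y * z) = - (y * (x * z))"
    using anticommuteD[OF assms(1)] by (metis minus_mult_left mult.assoc)
  also have "\<dots> = y * z * x"
    using anticommuteD[OF assms(2)] by (simp add: mult.assoc)
  finally show ?thesis unfolding commute_def .
qed

lemma anticommute_mult_right_first:
  assumes "anticommute x y" "commute x z"
  shows "anticommute x (y * z)"
proof -
  have "x * (y * z) = - (y * (x * z))"
    using anticommuteD[OF assms(1)] by (metis minus_mult_left mult.assoc)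
  also have "\<dots> = - (y * z * x)"
    using assms(2) by (simp add: commute_def mult.assoc)
  finally show ?thesis unfolding anticommute_def by simp
qed

lemma anticommute_mult_right_second:
  assumes "commute x y" "anticommute x z"
  shows "anticommute x (y * z)"
proof -
  have "x * (y * z) = y * (x * z)"
    using assms(1) by (simp add: commute_def flip: mult.assoc)
  also have "\<dots> = - (y * z * x)"
    using anticommuteD[OF assms(2)] by (simp add: mult.assoc)
  finally show ?thesis unfolding anticommute_def by simp
qed

lemma commute_mult_left:
  fixes x :: "'a::semigroup_mult"
  shows "commute x z \<Longrightarrow> commute y z \<Longrightarrow> commute (x * y) z"
  by (meson commute_mult_right commute_sym)

lemma commute_mult_left_anticommute:
  "anticommute x z \<Longrightarrow> anticommute y z \<Longrightarrow> commute (x * y) z"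
  by (meson commute_mult_right_anticommute commute_sym anticommute_sym)

lemma commute_uminus_left [simp]: "commute (- x) y \<longleftrightarrow> commute x y"
  and commute_uminus_right [simp]: "commute x (- y) \<longleftrightarrow> commute x y"
  for x y :: "'a::ring"
  unfolding commute_def by auto

lemmas commute_mult_simps =
  commute_mult_right commute_mult_right_anticommute
  anticommute_mult_right_first anticommute_mult_right_second
  commute_mult_left commute_mult_left_anticommute

lemma commute_inverse:
  fixes x :: "'a::monoid_mult"
  assumes "commute x y" "x * x' = 1" "x' * x = 1"
  shows "commute x' y"
proof -
  have "x' * y = x' * y * (x * x')" using assms(2) by simp
  also have "\<dots> = x' * (x * y) * x'" using assms(1) by (simp add: commute_def mult.assoc)
  also have "\<dots> = y * x'" using assms(3) by (simp flip: mult.assoc)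
  finally show ?thesis unfolding commute_def .
qed

lemma mult_inverse_if_commute:
  fixes x :: "'a::monoid_mult"
  assumes "commute x' y" "x * x' = 1" "y * y' = 1"
  shows "(x * y) * (x' * y') = 1"
proof -
  have "(x * y) * (x' * y') = x * (x' * y) * y'"
    using assms(1) by (simp add: commute_def mult.assoc)
  with assms(2,3) show ?thesis by (simp flip: mult.assoc)
qed

lemma power_mult_distrib_commute:
  fixes x :: "'a::monoid_mult"
  assumes "commute x y"
  shows "(x * y) ^ m = x ^ m * y ^ m"
proof (induction m)
  case (Suc m)
  have "y * x ^ m = x ^ m * y"
    using power_commuting_commutes[of x y m] assms by (simp add: commute_def)
  with Suc show ?case by (simp add: mult.assoc) (simp flip: mult.assoc)
qed simp

lemma sandwich_eq_zero:
  fixes z :: "'a::ring"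
  assumes "z * z = 0" and "commute z w \<or> anticommute z w"
  shows "z * w * z = 0"
  using assms(2)
proof
  assume "commute z w"
  then have "z * w * z = w * (z * z)" by (simp add: commute_def mult.assoc)
  with assms(1) show ?thesis by simp
next
  assume "anticommute z w"
  then have "z * w * z = - (w * (z * z))" by (simp add: anticommuteD mult.assoc)
  with assms(1) show ?thesis by simp
qed

lemma sandwich_left_eq_zero:
  fixes z :: "'a::ring"
  assumes "z * z = 0" and "commute z (u * y) \<or> anticommute z (u * y)"
  shows "(z * u) * y * (z * u) = 0"
proof -
  have "(z * u) * y * (z * u) = z * (u * y) * z * u" by (simp add: mult.assoc)
  with sandwich_eq_zero[OF assms] show ?thesis by simp
qed

lemma sandwich_right_eq_zero:
  fixes z :: "'a::ring"
  assumes "z * z = 0" and "commute z (y * u) \<or> anticommute z (y * u)"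
  shows "(u * z) * y * (u * z) = 0"
proof -
  have "(u * z) * y * (u * z) = u * (z * (y * u) * z)" by (simp add: mult.assoc)
  with sandwich_eq_zero[OF assms] show ?thesis by simp
qed

lemma mult_repeated_first_eq_zero:
  fixes z :: "'a::ring"
  assumes "z * z = 0" and "anticommute z u"
  shows "(z * u) * (z * w) = 0"
proof -
  have "(z * u) * (z * w) = z * u * z * w" by (simp add: mult.assoc)
  with sandwich_eq_zero[OF assms(1)] assms(2) show ?thesis by simp
qed

lemma mult_repeated_inner_eq_zero:
  fixes z :: "'a::ring"
  assumes "z * z = 0"
  shows "(u * z) * (z * w) = 0"
proof -
  have "(u * z) * (z * w) = u * (z * z) * w" by (simp add: mult.assoc)
  with assms show ?thesis by simp
qed

lemma mult_repeated_outer_eq_zero: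
  fixes z :: "'a::ring"
  assumes "z * z = 0" and "commute z (u * w) \<or> anticommute z (u * w)"
  shows "(z * u) * (w * z) = 0"
proof -
  have "(z * u) * (w * z) = z * (u * w) * z" by (simp add: mult.assoc)
  with sandwich_eq_zero[OF assms] show ?thesis by simp
qed

section \<open>Serre relations in degenerate configurations\<close>

(* Configurations in which the quantum Serre relation holds whatever the Gaussian binomial
  coefficients are. *)
definition serre_trivial :: "int \<Rightarrow> 'a::ring \<Rightarrow> 'a \<Rightarrow> bool" where
  "serre_trivial A X Y \<longleftrightarrow>
     A = 0 \<and> commute X Y \<or> A = -1 \<and> X * X = 0 \<and> X * Y * X = 0 \<or> A = -2 \<and> X * X = 0"

lemma serre_trivial_uminus_left [simp]: "serre_trivial A (- X) Y \<longleftrightarrow> serre_trivial A X Y"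
  by (simp add: serre_trivial_def commute_def)

lemma serre_trivial_uminus_right [simp]: "serre_trivial A X (- Y) \<longleftrightarrow> serre_trivial A X Y"
  by (simp add: serre_trivial_def commute_def)

locale kalg =
  fixes emb :: "'k::field \<Rightarrow> 'a::ring_1"
  assumes is_kalg: "is_kalg emb"
begin

lemma emb_one [simp]: "emb 1 = 1"
  and emb_add: "emb (x + y) = emb x + emb y"
  and emb_mult: "emb (x * y) = emb x * emb y"
  and emb_central: "emb x * a = a * emb x"
  using is_kalg unfolding is_kalg_def by blast+

lemma emb_minus: "emb (- x) = - emb x"
  using emb_add[of x "- x"] emb_add[of 0 0] by (simp add: eq_neg_iff_add_eq_0 add.commute)

lemma emb_diff: "emb (x - y) = emb x - emb y"
  using emb_add[of x "- y"] by (simp add: emb_minus)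

lemma emb_power: "emb (x ^ m) = emb x ^ m"
  by (induction m) (simp_all add: emb_mult)

lemma emb_left_commute: "a * (emb x * b) = emb x * (a * b)"
  by (metis emb_central mult.assoc)

lemma emb_mult_left: "emb x * (emb y * a) = emb (x * y) * a"
  by (simp add: emb_mult mult.assoc)

lemma emb_inverse_cancel: "x \<noteq> 0 \<Longrightarrow> emb (inverse x) * (emb x * a) = a"
  by (simp flip: mult.assoc emb_mult)

lemma emb_mult_eq_solve: "c \<noteq> 0 \<Longrightarrow> X = emb c * Y \<Longrightarrow> Y = emb (inverse c) * X"
  by (simp add: emb_inverse_cancel)

lemma emb_conj_cancel: "c \<noteq> 0 \<Longrightarrow> emb c * A * X * (emb (inverse c) * B) = A * X * B"
proof -
  assume "c \<noteq> 0"
  have "emb c * A * X * (emb (inverse c) * B) = emb c * emb (inverse c) * (A * X * B)"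
    by (simp add: emb_left_commute[of A] emb_left_commute[of X] mult.assoc)
  with \<open>c \<noteq> 0\<close> show ?thesis by (simp flip: emb_mult)
qed

lemma commute_emb [simp]: "commute (emb x) a" "commute a (emb x)"
  unfolding commute_def by (simp_all add: emb_central)

lemma serre_sum_eq_zero:
  assumes "serre_trivial A X Y"
  shows "(\<Sum>m=0..nat (1 - A). emb ((-1) ^ m * gbinom x (nat (1 - A)) m)
            * X ^ m * Y * X ^ (nat (1 - A) - m)) = 0"
proof -
  have power_zero: "X ^ m = 0" if "X * X = 0" "2 \<le> m" for m
  proof -
    obtain r where "m = Suc (Suc r)" using \<open>2 \<le> m\<close> by (metis add_2_eq_Suc le_Suc_ex)
    with \<open>X * X = 0\<close> show ?thesis by (simp flip: mult.assoc)
  qed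
  consider "A = 0" "commute X Y" | "A = -1" "X * X = 0" "X * Y * X = 0" | "A = -2" "X * X = 0"
    using assms unfolding serre_trivial_def by blast
  then show ?thesis
  proof cases
    case 1
    then show ?thesis by (simp add: One_nat_def emb_minus commute_def)
  next
    case 2
    have "emb ((-1) ^ m * gbinom x 2 m) * X ^ m * Y * X ^ (2 - m) = 0" if "m \<le> 2" for m
    proof -
      have "m = 0 \<or> m = 1 \<or> m = 2" using that by auto
      with 2 show ?thesis by (auto simp: power2_eq_square mult.assoc)
    qed
    with 2 show ?thesis by simp
  next
    case 3
    have "emb ((-1) ^ m * gbinom x 3 m) * X ^ m * Y * X ^ (3 - m) = 0" if "m \<le> 3" for m
      using that 3 power_zero[of m] power_zero[of "3 - m"] by (cases "2 \<le> m") auto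
    with 3 show ?thesis by simp
  qed
qed

lemma uq_relsI:
  assumes "\<And>i j. i \<in> {1..r} \<Longrightarrow> j \<in> {1..r} \<Longrightarrow> commute (K i) (K j)"
    and "\<And>i. i \<in> {1..r} \<Longrightarrow> K i * Ki i = 1 \<and> Ki i * K i = 1"
    and "\<And>i j. i \<in> {1..r} \<Longrightarrow> j \<in> {1..r} \<Longrightarrow>
           K i * E j * Ki i = emb (power_int (Q ^ d i) (A i j)) * E j"
    and "\<And>i j. i \<in> {1..r} \<Longrightarrow> j \<in> {1..r} \<Longrightarrow>
           K i * F j * Ki i = emb (power_int (Q ^ d i) (- A i j)) * F j"
    and "\<And>i. i \<in> {1..r} \<Longrightarrow> E i * F i - F i * E i =
           emb (inverse ((Q ^ d i) ^ k - inverse ((Q ^ d i) ^ k))) * (K i ^ k - Ki i ^ k)"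
    and "\<And>i j. i \<in> {1..r} \<Longrightarrow> j \<in> {1..r} \<Longrightarrow> i \<noteq> j \<Longrightarrow> commute (E i) (F j)"
    and "\<And>i j. i \<in> {1..r} \<Longrightarrow> j \<in> {1..r} \<Longrightarrow> i \<noteq> j \<Longrightarrow> serre_trivial (A i j) (E i) (E j)"
    and "\<And>i j. i \<in> {1..r} \<Longrightarrow> j \<in> {1..r} \<Longrightarrow> i \<noteq> j \<Longrightarrow> serre_trivial (A i j) (F i) (F j)"
  shows "uq_rels emb Q r A d k E F K Ki"
  unfolding uq_rels_def using assms serre_sum_eq_zero by (simp add: commute_def)

end

section \<open>Root data\<close>

lemma ip_evec: "a \<in> {1..n} \<Longrightarrow> ip n (evec a) v = v a"
proof -
  assume "a \<in> {1..n}"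
  have "ip n (evec a) v = (\<Sum>t=1..n. if t = a then v t else 0)"
    unfolding ip_def evec_def by (rule sum.cong) auto
  with \<open>a \<in> {1..n}\<close> show ?thesis by simp
qed

lemma ip_add: "ip n (\<lambda>t. u t + w t) v = ip n u v + ip n w v"
  unfolding ip_def by (simp add: distrib_right sum.distrib)

lemma ip_diff: "ip n (\<lambda>t. u t - w t) v = ip n u v - ip n w v"
  unfolding ip_def by (simp add: left_diff_distrib sum_subtractf)

lemma ip_uminus_right: "ip n u (\<lambda>t. - v t) = - ip n u v"
  unfolding ip_def by (simp add: sum_negf)

lemma cartan_eq_ip: "ip n (rt i) (rt i) = 2 \<Longrightarrow> cartan n rt i j = ip n (rt i) (rt j)"
  unfolding cartan_def by simp

lemma cartan_eq_double_ip: "ip n (rt i) (rt i) = 1 \<Longrightarrow> cartan n rt i j = 2 * ip n (rt i) (rt j)"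
  unfolding cartan_def by simp

lemma ip_sl_root: "i \<in> {1..<n} \<Longrightarrow> ip n (sl_root i) v = v i - v (i + 1)"
  unfolding sl_root_def by (simp add: ip_diff ip_evec)

lemma ip_sl_root_self: "i \<in> {1..<n} \<Longrightarrow> ip n (sl_root i) (sl_root i) = 2"
  by (simp add: ip_sl_root) (simp add: sl_root_def evec_def)

lemma cartan_sl: "i \<in> {1..<n} \<Longrightarrow> cartan n sl_root i j = ip n (sl_root i) (sl_root j)"
  by (simp add: cartan_eq_ip ip_sl_root_self)

lemma so_even_root_less: "i < n \<Longrightarrow> so_even_root n i = sl_root i"
  and so_odd_root_less: "i < n \<Longrightarrow> so_odd_root n i = sl_root i"
  unfolding so_even_root_def so_odd_root_def by simp_all

lemma ip_so_even_root_last: "2 \<le> n \<Longrightarrow> ip n (so_even_root n n) v = v (n - 1) + v n"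
  unfolding so_even_root_def by (simp add: ip_add ip_evec)

lemma ip_so_odd_root_last: "0 < n \<Longrightarrow> ip n (so_odd_root n n) v = v n"
  unfolding so_odd_root_def by (simp add: ip_evec)

lemma cartan_so_even:
  assumes "2 \<le> n" "i \<in> {1..n}"
  shows "cartan n (so_even_root n) i j = ip n (so_even_root n i) (so_even_root n j)"
proof (rule cartan_eq_ip)
  show "ip n (so_even_root n i) (so_even_root n i) = 2"
  proof (cases "i = n")
    case True
    with assms show ?thesis by (simp add: ip_so_even_root_last)
      (simp add: so_even_root_def evec_def)
  next
    case False
    with assms show ?thesis by (simp add: so_even_root_less ip_sl_root_self)
  qed
qed

lemma cartan_so_odd_less:
  "i \<in> {1..<n} \<Longrightarrow> cartan n (so_odd_root n) i j = ip n (so_odd_root n i) (so_odd_root n j)"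
  by (simp add: cartan_eq_ip so_odd_root_less ip_sl_root_self)

lemma cartan_so_odd_last:
  assumes "0 < n"
  shows "cartan n (so_odd_root n) n j = 2 * ip n (so_odd_root n n) (so_odd_root n j)"
proof (rule cartan_eq_double_ip)
  show "ip n (so_odd_root n n) (so_odd_root n n) = 1"
    using assms by (simp add: ip_so_odd_root_last) (simp add: so_odd_root_def evec_def)
qed

lemma cartan_sl_off_diagonal:
  "i \<in> {1..<n} \<Longrightarrow> j \<in> {1..<n} \<Longrightarrow> i \<noteq> j \<Longrightarrow>
     cartan n sl_root i j = (if j = i + 1 \<or> i = j + 1 then -1 else 0)"
  by (simp add: cartan_sl ip_sl_root) (auto simp: sl_root_def evec_def)

lemma cartan_so_even_eq_sl:
  "2 \<le> n \<Longrightarrow> i \<in> {1..<n} \<Longrightarrow> j < n \<Longrightarrow> cartan n (so_even_root n) i j = cartan n sl_root i j"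
  by (simp add: cartan_so_even cartan_sl so_even_root_less)

lemma cartan_so_even_last_col:
  "2 \<le> n \<Longrightarrow> i \<in> {1..<n} \<Longrightarrow> cartan n (so_even_root n) i n = (if i + 2 = n then -1 else 0)"
  by (simp add: cartan_so_even so_even_root_less ip_sl_root) (auto simp: so_even_root_def evec_def)

lemma cartan_so_even_last_row:
  "2 \<le> n \<Longrightarrow> j \<in> {1..<n} \<Longrightarrow> cartan n (so_even_root n) n j = (if j + 2 = n then -1 else 0)"
  by (simp add: cartan_so_even so_even_root_less ip_so_even_root_last) (auto
    simp: sl_root_def evec_def)

lemma cartan_so_odd_eq_sl:
  "i \<in> {1..<n} \<Longrightarrow> j < n \<Longrightarrow> cartan n (so_odd_root n) i j = cartan n sl_root i j"
  by (simp add: cartan_so_odd_less cartan_sl so_odd_root_less)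

lemma cartan_so_odd_last_col:
  "i \<in> {1..<n} \<Longrightarrow> cartan n (so_odd_root n) i n = (if i + 1 = n then -1 else 0)"
  by (simp add: cartan_so_odd_less so_odd_root_less ip_sl_root) (auto
    simp: so_odd_root_def evec_def)

lemma cartan_so_odd_last_row:
  "j \<in> {1..<n} \<Longrightarrow> cartan n (so_odd_root n) n j = (if j + 1 = n then -2 else 0)"
  by (simp add: cartan_so_odd_last so_odd_root_less ip_so_odd_root_last) (auto
    simp: sl_root_def evec_def)

lemma power_int_cartan_so_odd:
  fixes s :: "'k::field"
  assumes "0 < n" "i \<in> {1..n}"
  shows "power_int (s ^ (if i < n then 2 else 1)) (cartan n (so_odd_root n) i j)
    = power_int (s ^ 2) (ip n (so_odd_root n i) (so_odd_root n j))"
proof (cases "i = n")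
  case True
  with assms show ?thesis by (simp add: cartan_so_odd_last power_int_mult)
next
  case False
  with assms show ?thesis by (simp add: cartan_so_odd_less)
qed

section \<open>Fermionic generators\<close>

locale fermions =
  fixes n :: nat and psi psis :: "nat \<Rightarrow> 'a::ring"
  assumes anticommute_psi_psi: "a \<in> {1..n} \<Longrightarrow> b \<in> {1..n} \<Longrightarrow> anticommute (psi a) (psi b)"
    and anticommute_psis_psis: "a \<in> {1..n} \<Longrightarrow> b \<in> {1..n} \<Longrightarrow> anticommute (psis a) (psis b)"
    and anticommute_psi_psis:
      "a \<in> {1..n} \<Longrightarrow> b \<in> {1..n} \<Longrightarrow> a \<noteq> b \<Longrightarrow> anticommute (psi a) (psis b)"
    and psi_square: "a \<in> {1..n} \<Longrightarrow> psi a * psi a = 0"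
    and psis_square: "a \<in> {1..n} \<Longrightarrow> psis a * psis a = 0"
begin

lemma anticommute_psis_psi:
  "a \<in> {1..n} \<Longrightarrow> b \<in> {1..n} \<Longrightarrow> a \<noteq> b \<Longrightarrow> anticommute (psis a) (psi b)"
  using anticommute_psi_psis anticommute_sym by metis

lemmas fermion_simps [simp] = anticommute_psi_psi anticommute_psis_psis
  anticommute_psi_psis anticommute_psis_psi psi_square psis_square

definition E_sl :: "nat \<Rightarrow> 'a" where "E_sl i = psi i * psis (i + 1)"
definition F_sl :: "nat \<Rightarrow> 'a" where "F_sl i = psi (i + 1) * psis i"

definition E_even :: "nat \<Rightarrow> 'a" where
  "E_even i = (if i = n then psi (n - 1) * psi n else E_sl i)"
definition F_even :: "nat \<Rightarrow> 'a" where
  "F_even i = (if i = n then psis n * psis (n - 1) else F_sl i)"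

definition E_odd :: "nat \<Rightarrow> 'a" where "E_odd i = (if i = n then psi n else E_sl i)"
definition F_odd :: "nat \<Rightarrow> 'a" where "F_odd i = (if i = n then psis n else F_sl i)"

lemma E_even_last [simp]: "E_even n = psi (n - 1) * psi n"
  and F_even_last [simp]: "F_even n = psis n * psis (n - 1)"
  and E_odd_last [simp]: "E_odd n = psi n"
  and F_odd_last [simp]: "F_odd n = psis n"
  and E_even_less [simp]: "i \<noteq> n \<Longrightarrow> E_even i = E_sl i"
  and F_even_less [simp]: "i \<noteq> n \<Longrightarrow> F_even i = F_sl i"
  and E_odd_less [simp]: "i \<noteq> n \<Longrightarrow> E_odd i = E_sl i"
  and F_odd_less [simp]: "i \<noteq> n \<Longrightarrow> F_odd i = F_sl i"
  by (simp_all add: E_even_def F_even_def E_odd_def F_odd_def)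

(* Exchanging psi and psis preserves the relations and turns the images of the E_i into those
  of the F_i up to sign. *)
sublocale dual: fermions n psis psi
  by unfold_locales simp_all

lemma E_sl_eq_dual: "i \<in> {1..<n} \<Longrightarrow> E_sl i = - dual.F_sl i"
  and F_sl_eq_dual: "i \<in> {1..<n} \<Longrightarrow> F_sl i = - dual.E_sl i"
  unfolding E_sl_def F_sl_def dual.E_sl_def dual.F_sl_def
  by (simp_all add: anticommuteD[of "psi _" "psis _"])

lemma E_sl_square: "i \<in> {1..<n} \<Longrightarrow> E_sl i * E_sl i = 0"
  unfolding E_sl_def by (rule mult_repeated_first_eq_zero) simp_all

lemma commute_E_sl_F_sl: "i \<in> {1..<n} \<Longrightarrow> j \<in> {1..<n} \<Longrightarrow> i \<noteq> j \<Longrightarrow> commute (E_sl i) (F_sl j)"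
  unfolding E_sl_def F_sl_def by (simp add: commute_mult_simps)

lemma E_sl_mult_F_sl:
  assumes "i \<in> {1..<n}"
  shows "E_sl i * F_sl i = psi i * psis i * (psis (i + 1) * psi (i + 1))"
proof -
  have "E_sl i * F_sl i = psi i * (psis (i + 1) * psi (i + 1)) * psis i"
    by (simp add: E_sl_def F_sl_def mult.assoc)
  also have "\<dots> = psis (i + 1) * psi (i + 1) * (psi i * psis i)"
    using assms commute_mult_right_anticommute[of "psi i" "psis (i + 1)" "psi (i + 1)"]
    by (simp add: commute_def mult.assoc)
  also have "\<dots> = psi i * psis i * (psis (i + 1) * psi (i + 1))"
    using assms by (intro commuteD) (simp add: commute_mult_simps)
  finally show ?thesis .
qed

lemma F_sl_mult_E_sl:
  assumes "i \<in> {1..<n}"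
  shows "F_sl i * E_sl i = psis i * psi i * (psi (i + 1) * psis (i + 1))"
proof -
  have "F_sl i * E_sl i = psi (i + 1) * (psis i * psi i) * psis (i + 1)"
    by (simp add: E_sl_def F_sl_def mult.assoc)
  also have "\<dots> = psis i * psi i * (psi (i + 1) * psis (i + 1))"
    using assms commute_mult_right_anticommute[of "psi (i + 1)" "psis i" "psi i"]
    by (simp add: commute_def mult.assoc)
  finally show ?thesis .
qed

lemma serre_trivial_E_sl:
  assumes i: "i \<in> {1..<n}" and j: "j \<in> {1..<n}" and "i \<noteq> j"
  shows "serre_trivial (cartan n sl_root i j) (E_sl i) (E_sl j)"
proof -
  consider "j = i + 1" | "i = j + 1" | "j \<noteq> i + 1" "i \<noteq> j + 1" by blast
  then show ?thesis
  proof cases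
    case 1
    then have "E_sl i * E_sl j * E_sl i = 0"
      using i j unfolding E_sl_def by (intro sandwich_left_eq_zero)
        (simp_all add: commute_mult_simps)
    with 1 i j show ?thesis by (simp add: serre_trivial_def E_sl_square cartan_sl_off_diagonal)
  next
    case 2
    then have "E_sl i * E_sl j * E_sl i = 0"
      using i j unfolding E_sl_def by (intro sandwich_right_eq_zero)
        (simp_all add: commute_mult_simps)
    with 2 i j show ?thesis by (simp add: serre_trivial_def E_sl_square cartan_sl_off_diagonal)
  next
    case 3
    with i j \<open>i \<noteq> j\<close> show ?thesis
      by (simp add: serre_trivial_def cartan_sl_off_diagonal E_sl_def commute_mult_simps)
  qed
qed

lemma E_even_eq_dual: "2 \<le> n \<Longrightarrow> i \<in> {1..n} \<Longrightarrow> E_even i = - dual.F_even i"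
  and F_even_eq_dual: "2 \<le> n \<Longrightarrow> i \<in> {1..n} \<Longrightarrow> F_even i = - dual.E_even i"
proof -
  assume "2 \<le> n" "i \<in> {1..n}"
  then have "psi (n - 1) * psi n = - (psi n * psi (n - 1))"
    and "psis n * psis (n - 1) = - (psis (n - 1) * psis n)"
    by (auto intro: anticommuteD)
  with \<open>i \<in> {1..n}\<close> show "E_even i = - dual.F_even i" "F_even i = - dual.E_even i"
    unfolding E_even_def F_even_def dual.E_even_def dual.F_even_def
    by (auto simp: E_sl_eq_dual F_sl_eq_dual)
qed

lemma E_odd_eq_dual: "i \<in> {1..n} \<Longrightarrow> E_odd i = (if i = n then dual.F_odd i else - dual.F_odd i)"
  and F_odd_eq_dual: "i \<in> {1..n} \<Longrightarrow> F_odd i = (if i = n then dual.E_odd i else - dual.E_odd i)"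
  unfolding E_odd_def F_odd_def dual.E_odd_def dual.F_odd_def
  by (auto simp: E_sl_eq_dual F_sl_eq_dual)

lemma E_even_square: "2 \<le> n \<Longrightarrow> i \<in> {1..n} \<Longrightarrow> E_even i * E_even i = 0"
  unfolding E_even_def by (auto simp: E_sl_square intro: mult_repeated_first_eq_zero)

lemma E_even_mult_F_even_last:
  assumes "2 \<le> n"
  shows "E_even n * F_even n = psi (n - 1) * psis (n - 1) * (psi n * psis n)"
proof -
  have "E_even n * F_even n = psi (n - 1) * (psi n * psis n) * psis (n - 1)"
    by (simp add: mult.assoc)
  also have "\<dots> = psi n * psis n * (psi (n - 1) * psis (n - 1))"
    using assms commute_mult_right_anticommute[of "psi (n - 1)" "psi n" "psis n"]
    by (simp add: commute_def mult.assoc)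
  also have "\<dots> = psi (n - 1) * psis (n - 1) * (psi n * psis n)"
    using assms by (intro commuteD) (simp add: commute_mult_simps)
  finally show ?thesis .
qed

lemma F_even_mult_E_even_last:
  assumes "2 \<le> n"
  shows "F_even n * E_even n = psis (n - 1) * psi (n - 1) * (psis n * psi n)"
proof -
  have "F_even n * E_even n = psis n * (psis (n - 1) * psi (n - 1)) * psi n"
    by (simp add: mult.assoc)
  also have "\<dots> = psis (n - 1) * psi (n - 1) * (psis n * psi n)"
    using assms commute_mult_right_anticommute[of "psis n" "psis (n - 1)" "psi (n - 1)"]
    by (simp add: commute_def mult.assoc)
  finally show ?thesis .
qed

lemma commute_E_even_last_F_even:
  assumes "2 \<le> n" "j \<in> {1..<n}"
  shows "commute (E_even n) (F_even j)"
proof (cases "j + 1 = n")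
  case True
  with assms have "E_even n * F_even j = 0" "F_even j * E_even n = 0"
    by (auto simp: F_sl_def commute_mult_simps mult_repeated_inner_eq_zero
        intro!: mult_repeated_outer_eq_zero)
  then show ?thesis unfolding commute_def by simp
next
  case False
  with assms show ?thesis by (auto simp: F_sl_def commute_mult_simps)
qed

lemma serre_trivial_E_even_last_col:
  assumes "2 \<le> n" "i \<in> {1..<n}"
  shows "serre_trivial (cartan n (so_even_root n) i n) (E_even i) (E_even n)"
proof -
  consider "i + 1 = n" | "i + 2 = n" | "i + 2 < n" using assms by atomize_elim auto
  then show ?thesis
  proof cases
    case 1
    with assms have "E_even i * E_even n = 0" "E_even n * E_even i = 0"
      by (auto simp: E_sl_def intro!: mult_repeated_first_eq_zero)
    with assms 1 show ?thesis by (simp add: serre_trivial_def cartan_so_even_last_col commute_def)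
  next
    case 2
    with assms have "E_even i * E_even n * E_even i = 0"
      by (auto simp: E_sl_def commute_mult_simps intro!: sandwich_left_eq_zero)
    with assms 2 show ?thesis by (simp add: serre_trivial_def cartan_so_even_last_col E_sl_square)
  next
    case 3
    with assms show ?thesis
      by (auto simp: serre_trivial_def cartan_so_even_last_col E_sl_def commute_mult_simps)
  qed
qed

lemma serre_trivial_E_even_last_row:
  assumes "2 \<le> n" "j \<in> {1..<n}"
  shows "serre_trivial (cartan n (so_even_root n) n j) (E_even n) (E_even j)"
proof -
  consider "j + 1 = n" | "j + 2 = n" | "j + 2 < n" using assms by atomize_elim auto
  then show ?thesis
  proof cases
    case 1
    with assms have "E_even j * E_even n = 0" "E_even n * E_even j = 0"
      by (auto simp: E_sl_def intro!: mult_repeated_first_eq_zero)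
    with assms 1 show ?thesis by (simp add: serre_trivial_def cartan_so_even_last_row commute_def)
  next
    case 2
    with assms have "E_even n * E_even j * E_even n = 0"
      by (auto simp: E_sl_def commute_mult_simps intro!: sandwich_right_eq_zero)
    with assms 2 E_even_square[of n] show ?thesis
      by (simp add: serre_trivial_def cartan_so_even_last_row)
  next
    case 3
    with assms show ?thesis
      by (auto simp: serre_trivial_def cartan_so_even_last_row E_sl_def commute_mult_simps)
  qed
qed

lemma serre_trivial_E_even:
  assumes "2 \<le> n" "i \<in> {1..n}" "j \<in> {1..n}" "i \<noteq> j"
  shows "serre_trivial (cartan n (so_even_root n) i j) (E_even i) (E_even j)"
  using assms serre_trivial_E_sl[of i j] serre_trivial_E_even_last_col[of i]
    serre_trivial_E_even_last_row[of j]
  by (cases "i = n"; cases "j = n") (auto simp: cartan_so_even_eq_sl)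

lemma commute_E_odd_last_F_odd:
  assumes "j \<in> {1..<n}"
  shows "commute (E_odd n) (F_odd j)"
proof (cases "j + 1 = n")
  case True
  with assms have "E_odd n * F_odd j = 0" "F_odd j * E_odd n = 0"
    by (auto simp: F_sl_def commute_mult_simps intro!: sandwich_eq_zero simp flip: mult.assoc)
  then show ?thesis unfolding commute_def by simp
next
  case False
  with assms show ?thesis by (auto simp: F_sl_def commute_mult_simps)
qed

lemma serre_trivial_E_odd_last_col:
  assumes "i \<in> {1..<n}"
  shows "serre_trivial (cartan n (so_odd_root n) i n) (E_odd i) (E_odd n)"
proof (cases "i + 1 = n")
  case True
  with assms have "E_odd i * E_odd n * E_odd i = 0"
    by (auto simp: E_sl_def commute_mult_simps intro!: sandwich_left_eq_zero)
  with assms True show ?thesis by (simp add: serre_trivial_def cartan_so_odd_last_col E_sl_square)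
next
  case False
  with assms show ?thesis
    by (auto simp: serre_trivial_def cartan_so_odd_last_col E_sl_def commute_mult_simps)
qed

lemma serre_trivial_E_odd_last_row:
  assumes "j \<in> {1..<n}"
  shows "serre_trivial (cartan n (so_odd_root n) n j) (E_odd n) (E_odd j)"
  using assms by (auto simp: serre_trivial_def cartan_so_odd_last_row E_sl_def commute_mult_simps)

lemma serre_trivial_E_odd:
  assumes "i \<in> {1..n}" "j \<in> {1..n}" "i \<noteq> j"
  shows "serre_trivial (cartan n (so_odd_root n) i j) (E_odd i) (E_odd j)"
  using assms serre_trivial_E_sl[of i j] serre_trivial_E_odd_last_col[of i]
    serre_trivial_E_odd_last_row[of j]
  by (cases "i = n"; cases "j = n") (auto simp: cartan_so_odd_eq_sl)

end

(* Facts of the locale reach its self-interpretation dual only once the context is re-entered. *)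
context fermions
begin

lemma serre_trivial_F_sl:
  "i \<in> {1..<n} \<Longrightarrow> j \<in> {1..<n} \<Longrightarrow> i \<noteq> j \<Longrightarrow> serre_trivial (cartan n sl_root i j) (F_sl i) (F_sl j)"
  using dual.serre_trivial_E_sl by (simp add: F_sl_eq_dual)

lemma serre_trivial_F_even:
  "2 \<le> n \<Longrightarrow> i \<in> {1..n} \<Longrightarrow> j \<in> {1..n} \<Longrightarrow> i \<noteq> j \<Longrightarrow>
    serre_trivial (cartan n (so_even_root n) i j) (F_even i) (F_even j)"
  using dual.serre_trivial_E_even by (simp add: F_even_eq_dual)

lemma serre_trivial_F_odd:
  assumes "i \<in> {1..n}" "j \<in> {1..n}" "i \<noteq> j"
  shows "serre_trivial (cartan n (so_odd_root n) i j) (F_odd i) (F_odd j)"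
  using dual.serre_trivial_E_odd[OF assms] assms
  by (cases "i = n"; cases "j = n") (simp_all add: F_sl_eq_dual)

lemma commute_E_even_F_even:
  assumes "2 \<le> n" "i \<in> {1..n}" "j \<in> {1..n}" "i \<noteq> j"
  shows "commute (E_even i) (F_even j)"
proof -
  consider "i < n" "j < n" | "i = n" | "j = n" using assms by atomize_elim auto
  then show ?thesis
  proof cases
    case 1
    with assms show ?thesis by (simp add: commute_E_sl_F_sl)
  next
    case 2
    with assms show ?thesis using commute_E_even_last_F_even[of j] by simp
  next
    case 3
    with assms show ?thesis
      using dual.commute_E_even_last_F_even[of i] E_even_eq_dual[of i] F_even_eq_dual[of n]
      by (simp add: commute_sym)
  qed
qed

lemma commute_E_odd_F_odd:
  assumes "i \<in> {1..n}" "j \<in> {1..n}" "i \<noteq> j"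
  shows "commute (E_odd i) (F_odd j)"
proof -
  consider "i < n" "j < n" | "i = n" | "j = n" using assms by atomize_elim auto
  then show ?thesis
  proof cases
    case 1
    with assms show ?thesis by (simp add: commute_E_sl_F_sl)
  next
    case 2
    with assms show ?thesis using commute_E_odd_last_F_odd[of j] by simp
  next
    case 3
    with assms show ?thesis
      using dual.commute_E_odd_last_F_odd[of i] E_odd_eq_dual[of i] F_odd_eq_dual[of n]
      by (simp add: commute_sym)
  qed
qed

end

section \<open>The quantum Clifford algebra\<close>

lemma diff_inverse_nonzero:
  fixes x :: "'k::field"
  assumes "x \<noteq> 0" "x ^ 2 \<noteq> 1"
  shows "x - inverse x \<noteq> 0"
proof
  assume "x - inverse x = 0"
  with \<open>x \<noteq> 0\<close> have "x * x = 1" by (metis right_minus_eq right_inverse)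
  with \<open>x ^ 2 \<noteq> 1\<close> show False by (simp add: power2_eq_square)
qed

locale clifford = kalg emb for emb :: "'k::field \<Rightarrow> 'a::ring_1" +
  fixes q :: 'k and n k :: nat and psi psis om omi :: "nat \<Rightarrow> 'a"
  assumes two_nonzero: "(2::'k) \<noteq> 0"
    and q_nonzero: "q \<noteq> 0"
    and q_power_2k: "q ^ (2 * k) \<noteq> 1"
    and cl_rels: "cl_rels emb q n k psi psis om omi"
begin

lemma om_commute: "om a * om b = om b * om a"
  and om_psi: "om a * psi b = emb (if a = b then q else 1) * psi b * om a"
  and om_psis: "om a * psis b = emb (if a = b then inverse q else 1) * psis b * om a"
  if "a \<in> {1..n}" "b \<in> {1..n}"
  using cl_rels that unfolding cl_rels_def by blast+

lemma om_omi: "om a * omi a = 1"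
  and omi_om: "omi a * om a = 1"
  and psi_psis_omi: "psi a * psis a + emb (q ^ k) * psis a * psi a = omi a ^ k"
  and psi_psis_om: "psi a * psis a + emb (inverse q ^ k) * psis a * psi a = om a ^ k"
  if "a \<in> {1..n}"
  using cl_rels that unfolding cl_rels_def by blast+

lemma square_zero_if_anticommute: "anticommute x x \<Longrightarrow> x * x = (0::'a)"
proof -
  assume "anticommute x x"
  then have "emb 2 * (x * x) = 0"
    unfolding anticommute_def by (metis emb_add emb_one one_add_one distrib_right mult_1)
  then show "x * x = 0" using emb_inverse_cancel[OF two_nonzero, of "x * x"] by simp
qed

sublocale fermions n psi psis
  using cl_rels by unfold_locales (auto simp: cl_rels_def anticommute_def
    intro: square_zero_if_anticommute)

lemma commute_om_omi [simp]:
  assumes "a \<in> {1..n}" "b \<in> {1..n}"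
  shows "commute (om a) (om b)" "commute (omi a) (om b)"
    and "commute (om a) (omi b)" "commute (omi a) (omi b)"
proof -
  show ab: "commute (om a) (om b)" using assms om_commute unfolding commute_def by blast
  show ab': "commute (omi a) (om b)" using commute_inverse[OF ab] assms om_omi omi_om by blast
  have "commute (om b) (om a)" using assms om_commute unfolding commute_def by blast
  then have "commute (omi b) (om a)" using commute_inverse assms om_omi omi_om by blast
  then show "commute (om a) (omi b)" by (rule commute_sym)
  show "commute (omi a) (omi b)" using commute_inverse[OF commute_sym[OF ab']] assms om_omi omi_om
    by (blast intro: commute_sym)
qed

definition has_weight :: "'a \<Rightarrow> (nat \<Rightarrow> int) \<Rightarrow> bool" where
  "has_weight X v \<longleftrightarrow> (\<forall>a\<in>{1..n}. om a * X = emb (power_int q (v a)) * X * om a)"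

lemma has_weight_psi: "b \<in> {1..n} \<Longrightarrow> has_weight (psi b) (evec b)"
  unfolding has_weight_def evec_def using om_psi by auto

lemma has_weight_psis: "b \<in> {1..n} \<Longrightarrow> has_weight (psis b) (\<lambda>t. - evec b t)"
  unfolding has_weight_def evec_def using om_psis by (auto simp: power_int_minus)

lemma has_weight_mult:
  assumes "has_weight X u" "has_weight Y v"
  shows "has_weight (X * Y) (\<lambda>t. u t + v t)"
  unfolding has_weight_def
proof
  fix a assume a: "a \<in> {1..n}"
  have "om a * (X * Y) = emb (power_int q (u a)) * X * (om a * Y)"
    using assms(1) a unfolding has_weight_def by (simp flip: mult.assoc)
  also have "\<dots> = emb (power_int q (u a) * power_int q (v a)) * (X * Y) * om a"
    using assms(2) a unfolding has_weight_def
      by (simp add: emb_mult emb_left_commute[of X] mult.assoc)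
  finally show "om a * (X * Y) = emb (power_int q (u a + v a)) * (X * Y) * om a"
    using q_nonzero by (simp add: power_int_add)
qed

lemma om_conj: "has_weight X v \<Longrightarrow> a \<in> {1..n} \<Longrightarrow> om a * X * omi a = emb (power_int q (v a)) * X"
  unfolding has_weight_def by (simp add: om_omi mult.assoc)

lemma omi_conj:
  assumes "has_weight X v" "a \<in> {1..n}"
  shows "omi a * X * om a = emb (power_int q (- v a)) * X"
proof -
  have "X = (omi a * om a) * X * (omi a * om a)"
    using assms(2) by (simp add: omi_om)
  also have "\<dots> = omi a * (om a * X) * omi a * om a"
    by (simp add: mult.assoc)
  also have "\<dots> = emb (power_int q (v a)) * (omi a * X * om a)"
    using assms om_omi[of a] unfolding has_weight_def
    by (simp add: emb_left_commute[of "omi a"] mult.assoc)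
  finally have "omi a * X * om a = emb (inverse (power_int q (v a))) * X"
    using q_nonzero by (intro emb_mult_eq_solve) simp_all
  then show ?thesis by (simp add: power_int_minus)
qed

lemma om_omi_conj:
  assumes "has_weight X v" "a \<in> {1..n}" "b \<in> {1..n}"
  shows "om a * omi b * X * (omi a * om b) = emb (power_int q (v a - v b)) * X"
proof -
  have "om a * omi b * X * (omi a * om b) = om a * (omi b * X * om b) * omi a"
    using assms commute_om_omi(2)[of a b] unfolding commute_def by (simp add: mult.assoc)
  also have "\<dots> = emb (power_int q (- v b)) * (om a * X * omi a)"
    unfolding omi_conj[OF assms(1,3)] by (simp add: emb_left_commute[of "om a"] mult.assoc)
  also have "\<dots> = emb (power_int q (- v b) * power_int q (v a)) * X"
    unfolding om_conj[OF assms(1,2)] by (simp add: emb_mult mult.assoc)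
  finally show ?thesis
    using q_nonzero by (simp add: power_int_add[symmetric] mult.commute)
qed

lemma om_om_conj:
  assumes "has_weight X v" "a \<in> {1..n}" "b \<in> {1..n}"
  shows "om a * om b * X * (omi a * omi b) = emb (power_int q (v a + v b)) * X"
proof -
  have "om a * om b * X * (omi a * omi b) = om a * (om b * X * omi b) * omi a"
    using assms commute_om_omi(4)[of a b] unfolding commute_def by (simp add: mult.assoc)
  also have "\<dots> = emb (power_int q (v b)) * (om a * X * omi a)"
    unfolding om_conj[OF assms(1,3)] by (simp add: emb_left_commute[of "om a"] mult.assoc)
  also have "\<dots> = emb (power_int q (v b) * power_int q (v a)) * X"
    unfolding om_conj[OF assms(1,2)] by (simp add: emb_mult mult.assoc)
  finally show ?thesis
    using q_nonzero by (simp add: power_int_add[symmetric] add.commute)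
qed

definition K_sl :: "nat \<Rightarrow> 'a" where "K_sl i = om i * omi (i + 1)"
definition Ki_sl :: "nat \<Rightarrow> 'a" where "Ki_sl i = omi i * om (i + 1)"

definition K_even :: "nat \<Rightarrow> 'a" where
  "K_even i = (if i = n then emb q * om (n - 1) * om n else K_sl i)"
definition Ki_even :: "nat \<Rightarrow> 'a" where
  "Ki_even i = (if i = n then emb (inverse q) * omi (n - 1) * omi n else Ki_sl i)"

definition K_odd :: "'k \<Rightarrow> nat \<Rightarrow> 'a" where
  "K_odd s i = (if i = n then emb s * om n else K_sl i)"
definition Ki_odd :: "'k \<Rightarrow> nat \<Rightarrow> 'a" where
  "Ki_odd s i = (if i = n then emb (inverse s) * omi n else Ki_sl i)"

lemma K_even_last [simp]: "K_even n = emb q * om (n - 1) * om n"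
  and Ki_even_last [simp]: "Ki_even n = emb (inverse q) * omi (n - 1) * omi n"
  and K_odd_last [simp]: "K_odd s n = emb s * om n"
  and Ki_odd_last [simp]: "Ki_odd s n = emb (inverse s) * omi n"
  and K_even_less [simp]: "i \<noteq> n \<Longrightarrow> K_even i = K_sl i"
  and Ki_even_less [simp]: "i \<noteq> n \<Longrightarrow> Ki_even i = Ki_sl i"
  and K_odd_less [simp]: "i \<noteq> n \<Longrightarrow> K_odd s i = K_sl i"
  and Ki_odd_less [simp]: "i \<noteq> n \<Longrightarrow> Ki_odd s i = Ki_sl i"
  by (simp_all add: K_even_def Ki_even_def K_odd_def Ki_odd_def)

lemma K_sl_inverse: "i \<in> {1..<n} \<Longrightarrow> K_sl i * Ki_sl i = 1 \<and> Ki_sl i * K_sl i = 1"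
  unfolding K_sl_def Ki_sl_def by (simp add: mult_inverse_if_commute om_omi omi_om)

lemma K_even_inverse:
  assumes "2 \<le> n" "i \<in> {1..n}"
  shows "K_even i * Ki_even i = 1 \<and> Ki_even i * K_even i = 1"
proof (cases "i = n")
  case True
  have "n - 1 \<in> {1..n}" "n \<in> {1..n}" using assms by auto
  then have "(emb q * om (n - 1)) * (emb (inverse q) * omi (n - 1)) = 1"
    and "(emb (inverse q) * omi (n - 1)) * (emb q * om (n - 1)) = 1"
    using q_nonzero by (auto intro!: mult_inverse_if_commute
      simp: om_omi omi_om simp flip: emb_mult)
  with \<open>n - 1 \<in> {1..n}\<close> \<open>n \<in> {1..n}\<close> True show ?thesis
    by (auto intro!: mult_inverse_if_commute simp: commute_mult_left om_omi omi_om)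
next
  case False
  with assms show ?thesis by (simp add: K_sl_inverse)
qed

lemma K_odd_inverse:
  assumes "s \<noteq> 0" "i \<in> {1..n}"
  shows "K_odd s i * Ki_odd s i = 1 \<and> Ki_odd s i * K_odd s i = 1"
proof (cases "i = n")
  case True
  with assms show ?thesis
    by (auto intro!: mult_inverse_if_commute simp: om_omi omi_om simp flip: emb_mult)
next
  case False
  with assms show ?thesis by (simp add: K_sl_inverse)
qed

lemma K_sl_conj:
  "has_weight X v \<Longrightarrow> i \<in> {1..<n} \<Longrightarrow> K_sl i * X * Ki_sl i = emb (power_int q (ip n (sl_root i) v)) * X"
  unfolding K_sl_def Ki_sl_def by (simp add: om_omi_conj ip_sl_root)

lemma K_even_conj:
  assumes "2 \<le> n" "has_weight X v" "i \<in> {1..n}"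
  shows "K_even i * X * Ki_even i = emb (power_int q (ip n (so_even_root n i) v)) * X"
proof (cases "i = n")
  case True
  have "K_even n * X * Ki_even n = om (n - 1) * om n * X * (omi (n - 1) * omi n)"
    using emb_conj_cancel[OF q_nonzero, of "om (n - 1) * om n" X "omi (n - 1) * omi n"]
    by (simp add: mult.assoc)
  with assms True show ?thesis by (simp add: om_om_conj ip_so_even_root_last)
next
  case False
  with assms show ?thesis by (simp add: K_sl_conj so_even_root_less)
qed

lemma K_odd_conj:
  assumes "s \<noteq> 0" "has_weight X v" "i \<in> {1..n}"
  shows "K_odd s i * X * Ki_odd s i = emb (power_int q (ip n (so_odd_root n i) v)) * X"
proof (cases "i = n")
  case True
  have "K_odd s n * X * Ki_odd s n = om n * X * omi n"
    using emb_conj_cancel[OF assms(1), of "om n" X "omi n"] by simp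
  with assms True show ?thesis by (simp add: om_conj ip_so_odd_root_last)
next
  case False
  with assms show ?thesis by (simp add: K_sl_conj so_odd_root_less)
qed

lemma has_weight_E_sl: "j \<in> {1..<n} \<Longrightarrow> has_weight (E_sl j) (sl_root j)"
  and has_weight_F_sl: "j \<in> {1..<n} \<Longrightarrow> has_weight (F_sl j) (\<lambda>t. - sl_root j t)"
  using has_weight_mult[OF has_weight_psi has_weight_psis, of j "j + 1"]
    has_weight_mult[OF has_weight_psi has_weight_psis, of "j + 1" j]
  by (simp_all add: E_sl_def F_sl_def sl_root_def)

lemma has_weight_E_even: "2 \<le> n \<Longrightarrow> j \<in> {1..n} \<Longrightarrow> has_weight (E_even j) (so_even_root n j)"
  and has_weight_F_even: "2 \<le> n \<Longrightarrow> j \<in> {1..n} \<Longrightarrow> has_weight (F_even j) (\<lambda>t. - so_even_root n j t)"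
  using has_weight_mult[OF has_weight_psi has_weight_psi, of "n - 1" n]
    has_weight_mult[OF has_weight_psis has_weight_psis, of n "n - 1"]
    has_weight_E_sl[of j] has_weight_F_sl[of j]
  by (auto simp: so_even_root_def add.commute)

lemma has_weight_E_odd: "0 < n \<Longrightarrow> j \<in> {1..n} \<Longrightarrow> has_weight (E_odd j) (so_odd_root n j)"
  and has_weight_F_odd: "0 < n \<Longrightarrow> j \<in> {1..n} \<Longrightarrow> has_weight (F_odd j) (\<lambda>t. - so_odd_root n j t)"
  using has_weight_psi[of n] has_weight_psis[of n] has_weight_E_sl[of j] has_weight_F_sl[of j]
  by (auto simp: so_odd_root_def)

lemma om_power_k: "om a ^ k = psi a * psis a + emb (inverse (q ^ k)) * (psis a * psi a)"
  and omi_power_k: "omi a ^ k = psi a * psis a + emb (q ^ k) * (psis a * psi a)"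
  if "a \<in> {1..n}"
  using psi_psis_om[OF that] psi_psis_omi[OF that] by (simp_all add: power_inverse mult.assoc)

lemma q_power_k_diff_nonzero: "q ^ k - inverse (q ^ k) \<noteq> 0"
  using q_nonzero q_power_2k by (intro diff_inverse_nonzero) (simp_all add: power_mult mult.commute)

lemma E_F_commutator_sl:
  assumes "i \<in> {1..<n}"
  shows "E_sl i * F_sl i - F_sl i * E_sl i
    = emb (inverse (q ^ k - inverse (q ^ k))) * (K_sl i ^ k - Ki_sl i ^ k)"
proof -
  define a b where "a = i" and "b = i + 1"
  have ab: "a \<in> {1..n}" "b \<in> {1..n}" using assms by (auto simp: a_def b_def)
  define P N where "P c = psi c * psis c" and "N c = psis c * psi c" for c
  define t where "t = q ^ k"
  have "K_sl i ^ k = (P a + emb (inverse t) * N a) * (P b + emb t * N b)"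
    using ab by (simp add: K_sl_def power_mult_distrib_commute om_power_k omi_power_k
        P_def N_def t_def a_def b_def)
  moreover have "Ki_sl i ^ k = (P a + emb t * N a) * (P b + emb (inverse t) * N b)"
    using ab by (simp add: Ki_sl_def power_mult_distrib_commute om_power_k omi_power_k
        P_def N_def t_def a_def b_def)
  ultimately have "K_sl i ^ k - Ki_sl i ^ k = emb (t - inverse t) * (P a * N b - N a * P b)"
    by (simp add: algebra_simps emb_diff emb_mult_left emb_left_commute[of "P a"]
        emb_left_commute[of "N a"])
  moreover have "E_sl i * F_sl i - F_sl i * E_sl i = P a * N b - N a * P b"
    using assms by (simp add: E_sl_mult_F_sl F_sl_mult_E_sl P_def N_def a_def b_def)
  ultimately show ?thesis
    using q_power_k_diff_nonzero by (simp add: emb_mult_eq_solve t_def)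
qed

lemma E_F_commutator_even_last:
  assumes "2 \<le> n"
  shows "E_even n * F_even n - F_even n * E_even n
    = emb (inverse (q ^ k - inverse (q ^ k))) * (K_even n ^ k - Ki_even n ^ k)"
proof -
  define a b where "a = n - 1" and "b = n"
  have ab: "a \<in> {1..n}" "b \<in> {1..n}" using assms by (auto simp: a_def b_def)
  define P N where "P c = psi c * psis c" and "N c = psis c * psi c" for c
  define t where "t = q ^ k"
  have t: "emb t * (emb (inverse t) * X) = X" "emb (inverse t) * (emb t * X) = X" for X
    using q_nonzero by (simp_all add: t_def emb_inverse_cancel flip: mult.assoc emb_mult)
  have "K_even n ^ k = emb t * ((P a + emb (inverse t) * N a) * (P b + emb (inverse t) * N b))"
    using ab by (simp add: power_mult_distrib_commute commute_mult_simps om_power_k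
        P_def N_def t_def a_def b_def mult.assoc flip: emb_power)
  moreover have "Ki_even n ^ k = emb (inverse t) * ((P a + emb t * N a) * (P b + emb t * N b))"
    using ab by (simp add: power_mult_distrib_commute commute_mult_simps omi_power_k
        power_inverse P_def N_def t_def a_def b_def mult.assoc flip: emb_power)
  ultimately have "K_even n ^ k - Ki_even n ^ k = emb (t - inverse t) * (P a * P b - N a * N b)"
    by (simp add: algebra_simps emb_diff t emb_left_commute[of "P a"] emb_left_commute[of "N a"])
  moreover have "E_even n * F_even n - F_even n * E_even n = P a * P b - N a * N b"
    using E_even_mult_F_even_last[OF assms] F_even_mult_E_even_last[OF assms]
    by (simp add: P_def N_def a_def b_def)
  ultimately show ?thesis
    using q_power_k_diff_nonzero by (simp add: emb_mult_eq_solve t_def)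
qed

lemma E_F_commutator_odd_last:
  assumes "0 < n" "s ^ 2 = q"
  shows "E_odd n * F_odd n - F_odd n * E_odd n
    = emb (inverse (s ^ k - inverse (s ^ k))) * (K_odd s n ^ k - Ki_odd s n ^ k)"
proof -
  define u where "u = s ^ k"
  have u: "u \<noteq> 0" "u ^ 2 = q ^ k"
    using assms q_nonzero unfolding u_def by (auto simp flip: power_mult)
      (metis power_mult mult.commute)
  have nonzero: "u - inverse u \<noteq> 0"
  proof (rule diff_inverse_nonzero)
    show "u \<noteq> 0" by (fact u(1))
    show "u ^ 2 \<noteq> 1" using u(2) q_power_2k by (metis power_mult power_one mult.commute)
  qed
  have scale: "emb u * (emb (inverse (q ^ k)) * X) = emb (inverse u) * X"
    "emb (inverse u) * (emb (q ^ k) * X) = emb u * X" for X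
    using u by (simp_all add: emb_mult_left power2_eq_square field_simps flip: u(2))
  have "K_odd s n ^ k - Ki_odd s n ^ k
      = emb (u - inverse u) * (psi n * psis n - psis n * psi n)"
    using assms by (simp add: power_mult_distrib_commute om_power_k omi_power_k scale algebra_simps
        emb_diff power_inverse flip: emb_power u_def)
  with nonzero show ?thesis by (simp add: emb_mult_eq_solve flip: u_def)
qed

lemma uq_rels_sl: "uq_rels emb q (n - 1) (cartan n sl_root) (\<lambda>_. 1) k E_sl F_sl K_sl Ki_sl"
proof (rule uq_relsI)
  fix i j assume "i \<in> {1..n - 1}" "j \<in> {1..n - 1}"
  then have i: "i \<in> {1..<n}" and j: "j \<in> {1..<n}" by auto
  show "commute (K_sl i) (K_sl j)"
    using i j by (simp add: K_sl_def commute_mult_simps)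
  show "K_sl i * E_sl j * Ki_sl i = emb (power_int (q ^ 1) (cartan n sl_root i j)) * E_sl j"
    using K_sl_conj[OF has_weight_E_sl[OF j] i] i by (simp add: cartan_sl)
  show "K_sl i * F_sl j * Ki_sl i = emb (power_int (q ^ 1) (- cartan n sl_root i j)) * F_sl j"
    using K_sl_conj[OF has_weight_F_sl[OF j] i] i by (simp add: cartan_sl ip_uminus_right)
  show "i \<noteq> j \<Longrightarrow> commute (E_sl i) (F_sl j)"
    using i j by (rule commute_E_sl_F_sl)
  show "i \<noteq> j \<Longrightarrow> serre_trivial (cartan n sl_root i j) (E_sl i) (E_sl j)"
    using i j by (rule serre_trivial_E_sl)
  show "i \<noteq> j \<Longrightarrow> serre_trivial (cartan n sl_root i j) (F_sl i) (F_sl j)"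
    using i j by (rule serre_trivial_F_sl)
next
  fix i assume "i \<in> {1..n - 1}"
  then have i: "i \<in> {1..<n}" by auto
  show "K_sl i * Ki_sl i = 1 \<and> Ki_sl i * K_sl i = 1"
    using i by (rule K_sl_inverse)
  show "E_sl i * F_sl i - F_sl i * E_sl i
    = emb (inverse ((q ^ 1) ^ k - inverse ((q ^ 1) ^ k))) * (K_sl i ^ k - Ki_sl i ^ k)"
    using E_F_commutator_sl[OF i] by simp
qed

lemma uq_rels_so_even:
  assumes "2 \<le> n"
  shows "uq_rels emb q n (cartan n (so_even_root n)) (\<lambda>_. 1) k E_even F_even K_even Ki_even"
proof (rule uq_relsI)
  fix i j assume i: "i \<in> {1..n}" and j: "j \<in> {1..n}"
  show "commute (K_even i) (K_even j)"
    using assms i j by (cases "i = n"; cases "j = n") (auto simp: K_sl_def commute_mult_simps)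
  show "K_even i * E_even j * Ki_even i
      = emb (power_int (q ^ 1) (cartan n (so_even_root n) i j)) * E_even j"
    using K_even_conj[OF assms has_weight_E_even[OF assms j] i] assms i
      by (simp add: cartan_so_even)
  show "K_even i * F_even j * Ki_even i
      = emb (power_int (q ^ 1) (- cartan n (so_even_root n) i j)) * F_even j"
    using K_even_conj[OF assms has_weight_F_even[OF assms j] i] assms i
    by (simp add: cartan_so_even ip_uminus_right)
  show "i \<noteq> j \<Longrightarrow> commute (E_even i) (F_even j)"
    using assms i j by (rule commute_E_even_F_even)
  show "i \<noteq> j \<Longrightarrow> serre_trivial (cartan n (so_even_root n) i j) (E_even i) (E_even j)"
    using assms i j by (rule serre_trivial_E_even)
  show "i \<noteq> j \<Longrightarrow> serre_trivial (cartan n (so_even_root n) i j) (F_even i) (F_even j)"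
    using assms i j by (rule serre_trivial_F_even)
next
  fix i assume i: "i \<in> {1..n}"
  show "K_even i * Ki_even i = 1 \<and> Ki_even i * K_even i = 1"
    using assms i by (rule K_even_inverse)
  show "E_even i * F_even i - F_even i * E_even i
    = emb (inverse ((q ^ 1) ^ k - inverse ((q ^ 1) ^ k))) * (K_even i ^ k - Ki_even i ^ k)"
    using E_F_commutator_sl[of i] E_F_commutator_even_last[OF assms] i
    by (cases "i = n") (simp_all add: K_even_def)
qed

lemma uq_rels_so_odd:
  assumes "0 < n" "s ^ 2 = q"
  shows "uq_rels emb s n (cartan n (so_odd_root n)) (\<lambda>i. if i < n then 2 else 1) k
    E_odd F_odd (K_odd s) (Ki_odd s)"
proof -
  have s: "s \<noteq> 0" using assms q_nonzero by auto
  show ?thesis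
  proof (rule uq_relsI)
    fix i j assume i: "i \<in> {1..n}" and j: "j \<in> {1..n}"
    show "commute (K_odd s i) (K_odd s j)"
      using i j by (cases "i = n"; cases "j = n") (auto simp: K_sl_def commute_mult_simps)
    show "K_odd s i * E_odd j * Ki_odd s i
        = emb (power_int (s ^ (if i < n then 2 else 1)) (cartan n (so_odd_root n) i j)) * E_odd j"
      using K_odd_conj[OF s has_weight_E_odd[OF assms(1) j] i] assms i
      by (simp add: power_int_cartan_so_odd)
    show "K_odd s i * F_odd j * Ki_odd s i
        = emb (power_int (s ^ (if i < n then 2 else 1)) (- cartan n (so_odd_root n) i j)) * F_odd j"
      using K_odd_conj[OF s has_weight_F_odd[OF assms(1) j] i] assms i
      by (simp add: power_int_minus power_int_cartan_so_odd ip_uminus_right)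
    show "i \<noteq> j \<Longrightarrow> commute (E_odd i) (F_odd j)"
      using i j by (rule commute_E_odd_F_odd)
    show "i \<noteq> j \<Longrightarrow> serre_trivial (cartan n (so_odd_root n) i j) (E_odd i) (E_odd j)"
      using i j by (rule serre_trivial_E_odd)
    show "i \<noteq> j \<Longrightarrow> serre_trivial (cartan n (so_odd_root n) i j) (F_odd i) (F_odd j)"
      using i j by (rule serre_trivial_F_odd)
  next
    fix i assume i: "i \<in> {1..n}"
    show "K_odd s i * Ki_odd s i = 1 \<and> Ki_odd s i * K_odd s i = 1"
      using s i by (rule K_odd_inverse)
    show "E_odd i * F_odd i - F_odd i * E_odd i = emb (inverse ((s ^ (if i < n then 2 else 1)) ^ k
        - inverse ((s ^ (if i < n then 2 else 1)) ^ k))) * (K_odd s i ^ k - Ki_odd s i ^ k)"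
      using E_F_commutator_sl[of i] E_F_commutator_odd_last[OF assms] i assms(2)
      by (cases "i = n") auto
  qed
qed

end

theorem proposition3p17:
  fixes emb :: "'k::field \<Rightarrow> 'a::ring_1"
    and q :: 'k and n k :: nat
    and psi psis om omi :: "nat \<Rightarrow> 'a"
  assumes char: "(2::'k) \<noteq> 0"
    and q_nz: "q \<noteq> 0"
    and n_pos: "0 < n" and k_pos: "0 < k"
    and q2k: "q ^ (2 * k) \<noteq> 1"
    and alg: "is_kalg emb"
    and cl: "cl_rels emb q n k psi psis om omi"
  shows
    "uq_rels emb q (n - 1) (cartan n sl_root) (\<lambda>_. 1) k
        (\<lambda>i. psi i * psis (i + 1)) (\<lambda>i. psi (i + 1) * psis i)
        (\<lambda>i. om i * omi (i + 1)) (\<lambda>i. omi i * om (i + 1))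
     \<and> (2 \<le> n \<longrightarrow>
        uq_rels emb q n (cartan n (so_even_root n)) (\<lambda>_. 1) k
        (\<lambda>i. if i = n then psi (n - 1) * psi n else psi i * psis (i + 1))
        (\<lambda>i. if i = n then psis n * psis (n - 1) else psi (i + 1) * psis i)
        (\<lambda>i. if i = n then emb q * om (n - 1) * om n else om i * omi (i + 1))
        (\<lambda>i. if i = n then emb (inverse q) * omi (n - 1) * omi n else omi i * om (i + 1)))
     \<and> (\<forall>s::'k. s ^ 2 = q \<longrightarrow>
        uq_rels emb s n (cartan n (so_odd_root n)) (\<lambda>i. if i < n then 2 else 1) k
        (\<lambda>i. if i = n then psi n else psi i * psis (i + 1))
        (\<lambda>i. if i = n then psis n else psi (i + 1) * psis i)
        (\<lambda>i. if i = n then emb s * om n else om i * omi (i + 1))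
        (\<lambda>i. if i = n then emb (inverse s) * omi n else omi i * om (i + 1)))"
proof -
  interpret clifford emb q n k psi psis om omi
    by unfold_locales (fact alg char q_nz q2k cl)+
  show ?thesis
    using uq_rels_sl uq_rels_so_even uq_rels_so_odd[OF n_pos]
    unfolding E_sl_def[abs_def] F_sl_def[abs_def] E_even_def[abs_def] F_even_def[abs_def]
      E_odd_def[abs_def] F_odd_def[abs_def] K_sl_def[abs_def] Ki_sl_def[abs_def]
      K_even_def[abs_def] Ki_even_def[abs_def] K_odd_def[abs_def] Ki_odd_def[abs_def]
    by blast
qed

end
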